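(* Let $X$ be a real random variable with mean zero and finite variance $\sigma^2>0$, let $X^*$ have the zero bias distribution of $X$, and suppose $X^*\leq_{\sigma,k}X+c$ for positive constants $k$ and $c$. Then for all $x\ge0$, $$\mathbb{P}(X-\mathbb{E}X\ge x)\le\exp\left(-\frac{x^2}{2(k^2+cx)}\right).$$
   Context: Zero bias transform: for $X$ with mean zero and finite variance $\sigma^2$, $X^*$ has the zero bias distribution of $X$ if $\mathbb{E}[Xf(X)]=\sigma^2\mathbb{E}[f'(X^* )]$ for all absolutely continuous $f$ for which the expectations exist. Weighted stochastic order: $U\leq_{a,b}V$ means $a^2\mathbb{E}f(U)\le b^2\mathbb{E}f(V)$ for every increasing positive function $f$ for which the expectations exist. *)

theory Defs
  imports "HOL-Probability.Probability"
begin

text \<open>A function f on the reals is (locally) absolutely continuous with (a.e.) derivative g: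
  g is locally Lebesgue integrable and f is an indefinite integral of g.\<close>
definition abs_cont_deriv :: "(real \<Rightarrow> real) \<Rightarrow> (real \<Rightarrow> real) \<Rightarrow> bool" where
  "abs_cont_deriv f g \<longleftrightarrow> g \<in> borel_measurable borel \<and>
     (\<forall>a b. a \<le> b \<longrightarrow> set_integrable lborel {a..b} g \<and>
        f b - f a = (LINT t:{a..b}|lborel. g t))"

definition zero_bias :: "'a measure \<Rightarrow> ('a \<Rightarrow> real) \<Rightarrow> 'b measure \<Rightarrow> ('b \<Rightarrow> real) \<Rightarrow> bool" where
  "zero_bias M X N Xs \<longleftrightarrow>
     (\<forall>f g. abs_cont_deriv f g \<longrightarrow> integrable M (\<lambda>w. X w * f (X w)) \<longrightarrow>
        integrable N (\<lambda>w. g (Xs w)) \<longrightarrow>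
        (\<integral>w. X w * f (X w) \<partial>M) =
          (\<integral>w. (X w - (\<integral>v. X v \<partial>M))\<^sup>2 \<partial>M) * (\<integral>w. g (Xs w) \<partial>N))"

definition weighted_order :: "real \<Rightarrow> real \<Rightarrow> 'a measure \<Rightarrow> ('a \<Rightarrow> real) \<Rightarrow> 'b measure \<Rightarrow> ('b \<Rightarrow> real) \<Rightarrow> bool" where
  "weighted_order a b M U N V \<longleftrightarrow>
     (\<forall>f::real \<Rightarrow> real. mono f \<longrightarrow> (\<forall>x. f x > 0) \<longrightarrow>
        integrable M (\<lambda>w. f (U w)) \<longrightarrow> integrable N (\<lambda>w. f (V w)) \<longrightarrow>
        a\<^sup>2 * (\<integral>w. f (U w) \<partial>M) \<le> b\<^sup>2 * (\<integral>w. f (V w) \<partial>N))"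

end

theory Submission
  imports Defs
begin

text \<open>Truncated at the level \<open>x\<close>, \<open>Y = min X x\<close> has finite exponential moments. The zero bias
  identity for \<open>f s = exp (t * min s x)\<close>, whose derivative is at most \<open>t * f\<close>, followed by the
  weighted order applied to the increasing positive \<open>f\<close>, gives
  \<open>E[Y exp(tY)] \<le> E[X f(X)] \<le> t k\<^sup>2 E[f(X + c)] \<le> k\<^sup>2 t exp(ct) E[exp(tY)]\<close>.
  Hence the moment generating function \<open>F\<close> of \<open>Y\<close> satisfies \<open>F' \<le> \<Phi>' F\<close> for
  \<open>\<Phi> t = k\<^sup>2 t\<^sup>2 / (2 (1 - c t))\<close>, so \<open>F \<le> exp \<Phi>\<close> on \<open>]0, 1/c[\<close> (Herbst's argument), and
  Chernoff's bound at \<open>t = x / (k\<^sup>2 + c x)\<close> gives the claim.\<close>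

lemma has_real_derivative_integral:
  fixes f f' :: "real \<Rightarrow> 'a \<Rightarrow> real"
  assumes S: "open S" "convex S" "\<theta> \<in> S"
    and integrable: "\<And>t. t \<in> S \<Longrightarrow> integrable M (f t)"
    and f'_measurable: "f' \<theta> \<in> borel_measurable M"
    and deriv: "\<And>t w. t \<in> S \<Longrightarrow> w \<in> space M \<Longrightarrow> ((\<lambda>s. f s w) has_real_derivative f' t w) (at t)"
    and dominated: "\<And>t w. t \<in> S \<Longrightarrow> w \<in> space M \<Longrightarrow> \<bar>f' t w\<bar> \<le> g w"
    and g: "integrable M g"
  shows "((\<lambda>t. \<integral>w. f t w \<partial>M) has_real_derivative (\<integral>w. f' \<theta> w \<partial>M)) (at \<theta>)"
proof -
  have "((\<lambda>t. ((\<integral>w. f t w \<partial>M) - (\<integral>w. f \<theta> w \<partial>M)) / (t - \<theta>)) \<longlongrightarrow> (\<integral>w. f' \<theta> w \<partial>M))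
      (at \<theta> within S)"
    unfolding tendsto_at_iff_sequentially comp_def
  proof (intro allI impI)
    fix T :: "nat \<Rightarrow> real" assume T: "\<forall>i. T i \<in> S - {\<theta>}" and T_lim: "T \<longlonglongrightarrow> \<theta>"
    define q where "q i w = (f (T i) w - f \<theta> w) / (T i - \<theta>)" for i w
    have lim: "(\<lambda>i. \<integral>w. q i w \<partial>M) \<longlonglongrightarrow> (\<integral>w. f' \<theta> w \<partial>M)"
    proof (rule integral_dominated_convergence[OF f'_measurable _ g])
      show "q i \<in> borel_measurable M" for i
        unfolding q_def using integrable T S(3)
        by (intro borel_measurable_divide borel_measurable_diff borel_measurable_integrable) auto
      show "AE w in M. (\<lambda>i. q i w) \<longlonglongrightarrow> f' \<theta> w"
      proof (rule AE_I2)
        fix w assume "w \<in> space M"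
        then have "((\<lambda>s. f s w) has_real_derivative f' \<theta> w) (at \<theta> within S)"
          using deriv S(3) by (blast intro: has_field_derivative_at_within)
        then have "((\<lambda>s. (f s w - f \<theta> w) / (s - \<theta>)) \<longlongrightarrow> f' \<theta> w) (at \<theta> within S)"
          by (simp only: has_field_derivative_iff)
        then show "(\<lambda>i. q i w) \<longlonglongrightarrow> f' \<theta> w"
          using T T_lim unfolding tendsto_at_iff_sequentially q_def comp_def by blast
      qed
      show "AE w in M. norm (q i w) \<le> g w" for i
      proof (rule AE_I2)
        fix w assume "w \<in> space M"
        then have "norm (f (T i) w - f \<theta> w) \<le> g w * norm (T i - \<theta>)"
          using T S(3) deriv dominated
          by (intro field_differentiable_bound[OF S(2)]) (auto intro: has_field_derivative_at_within)
        then show "norm (q i w) \<le> g w"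
          using T by (simp add: q_def divide_le_eq)
      qed
    qed
    have integral_q: "(\<integral>w. q i w \<partial>M) = ((\<integral>w. f (T i) w \<partial>M) - (\<integral>w. f \<theta> w \<partial>M)) / (T i - \<theta>)" for i
      using integrable T S(3) by (simp add: q_def integral_diff)
    show "(\<lambda>i. ((\<integral>w. f (T i) w \<partial>M) - (\<integral>w. f \<theta> w \<partial>M)) / (T i - \<theta>))
        \<longlonglongrightarrow> (\<integral>w. f' \<theta> w \<partial>M)"
      using lim unfolding integral_q .
  qed
  then have "((\<lambda>t. \<integral>w. f t w \<partial>M) has_real_derivative (\<integral>w. f' \<theta> w \<partial>M)) (at \<theta> within S)"
    by (simp only: has_field_derivative_iff)
  then show ?thesis
    using at_within_open[OF S(3,1)] by simp
qed

lemma (in finite_measure) has_real_derivative_mgf: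
  assumes Y: "integrable M Y"
    and bounded_above: "\<And>w. w \<in> space M \<Longrightarrow> Y w \<le> a" and "0 < \<theta>"
  shows "((\<lambda>t. \<integral>w. exp (t * Y w) \<partial>M) has_real_derivative (\<integral>w. Y w * exp (\<theta> * Y w) \<partial>M)) (at \<theta>)"
proof -
  define C where "C = exp (2 * \<theta> * \<bar>a\<bar>)"
  have exp_le: "exp (t * Y w) \<le> C" if "w \<in> space M" "t \<in> {0<..<2 * \<theta>}" for t w
  proof -
    have "t * Y w \<le> t * \<bar>a\<bar>"
      using bounded_above[OF that(1)] that(2) by (intro mult_left_mono) auto
    also have "\<dots> \<le> 2 * \<theta> * \<bar>a\<bar>"
      using that(2) by (intro mult_right_mono) auto
    finally show ?thesis by (simp add: C_def)
  qed
  show ?thesis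
  proof (rule has_real_derivative_integral[where S="{0<..<2 * \<theta>}" and g="\<lambda>w. \<bar>Y w\<bar> * C"])
    show "integrable M (\<lambda>w. exp (t * Y w))" if "t \<in> {0<..<2 * \<theta>}" for t
      using exp_le that borel_measurable_integrable[OF Y] by (intro integrable_const_bound[where B=C]) auto
    show "((\<lambda>s. exp (s * Y w)) has_real_derivative Y w * exp (t * Y w)) (at t)" for t w
      by (auto intro!: derivative_eq_intros)
    show "\<bar>Y w * exp (t * Y w)\<bar> \<le> \<bar>Y w\<bar> * C" if "t \<in> {0<..<2 * \<theta>}" "w \<in> space M" for t w
      using exp_le[OF that(2,1)] by (simp add: abs_mult mult_left_mono)
  qed (use Y \<open>0 < \<theta>\<close> in auto)
qed

lemma integrable_mult_bounded:
  fixes f g :: "'a \<Rightarrow> real"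
  assumes "integrable M f" "g \<in> borel_measurable M" "\<And>w. w \<in> space M \<Longrightarrow> \<bar>g w\<bar> \<le> B"
  shows "integrable M (\<lambda>w. f w * g w)"
proof (rule Bochner_Integration.integrable_bound[where f="\<lambda>w. B * f w"])
  have "\<bar>f w\<bar> * \<bar>g w\<bar> \<le> \<bar>f w\<bar> * \<bar>B\<bar>" if "w \<in> space M" for w
    using assms(3)[OF that] by (intro mult_left_mono) auto
  then show "AE w in M. norm (f w * g w) \<le> norm (B * f w)"
    by (intro AE_I2) (simp add: abs_mult mult.commute)
qed (use assms in auto)

text \<open>At \<open>u = c t\<close> the right-hand side is \<open>\<Phi>' t / (k\<^sup>2 t)\<close>.\<close>

lemma exp_le_div_one_minus_sq:
  fixes u :: real
  assumes "0 \<le> u" "u < 1"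
  shows "exp u \<le> (2 - u) / (2 * (1 - u)\<^sup>2)"
proof -
  have "(1 - u) * exp u \<le> 1"
    using exp_ge_add_one_self[of "- u"] by (simp add: exp_minus field_simps)
  also have "1 \<le> (2 - u) / (2 * (1 - u))"
    using assms by (simp add: field_simps)
  finally have "exp u \<le> (2 - u) / (2 * (1 - u)) / (1 - u)"
    using assms by (simp add: le_divide_eq mult.commute)
  then show ?thesis
    by (simp only: divide_divide_eq_left power2_eq_square mult.assoc)
qed

lemma le_exp_of_derivative_le:
  fixes F F' \<Phi> \<Phi>' G :: "real \<Rightarrow> real"
  assumes "0 < \<theta>"
    and F: "\<And>t. 0 < t \<Longrightarrow> t \<le> \<theta> \<Longrightarrow> (F has_real_derivative F' t) (at t)"
    and \<Phi>: "\<And>t. 0 < t \<Longrightarrow> t \<le> \<theta> \<Longrightarrow> (\<Phi> has_real_derivative \<Phi>' t) (at t)"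
    and derivative_le: "\<And>t. 0 < t \<Longrightarrow> t \<le> \<theta> \<Longrightarrow> F' t \<le> \<Phi>' t * F t"
    and nonneg: "\<And>t. 0 < t \<Longrightarrow> t \<le> \<theta> \<Longrightarrow> 0 \<le> F t \<and> 0 \<le> \<Phi> t"
    and initial: "\<And>t. 0 < t \<Longrightarrow> t \<le> \<theta> \<Longrightarrow> F t \<le> G t" "(G \<longlongrightarrow> 1) (at_right 0)"
  shows "F \<theta> \<le> exp (\<Phi> \<theta>)"
proof -
  define h where "h t = F t * exp (- \<Phi> t)" for t
  have h_antimono: "h \<theta> \<le> h e" if "0 < e" "e \<le> \<theta>" for e
  proof (rule DERIV_nonpos_imp_nonincreasing[OF that(2)])
    fix t assume "e \<le> t" "t \<le> \<theta>"
    with that have t: "0 < t" "t \<le> \<theta>"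
      by auto
    have "(h has_real_derivative (F' t - \<Phi>' t * F t) * exp (- \<Phi> t)) (at t)"
      using DERIV_mult[OF F[OF t] DERIV_fun_exp[OF DERIV_minus[OF \<Phi>[OF t]]]]
      unfolding h_def[abs_def] by (simp add: algebra_simps)
    moreover have "(F' t - \<Phi>' t * F t) * exp (- \<Phi> t) \<le> 0"
      using derivative_le[OF t] by (intro mult_nonpos_nonneg) auto
    ultimately show "\<exists>y. (h has_real_derivative y) (at t) \<and> y \<le> 0"
      by blast
  qed
  have "h \<theta> \<le> G e" if "0 < e" "e \<le> \<theta>" for e
  proof -
    have "h e \<le> F e"
      using nonneg[OF that] by (simp add: h_def mult_left_le)
    then show ?thesis
      using h_antimono[OF that] initial(1)[OF that] by linarith
  qed
  then have "h \<theta> \<le> 1"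
    using \<open>0 < \<theta>\<close>
    by (intro tendsto_le[OF trivial_limit_at_right_real initial(2) tendsto_const])
       (auto simp: eventually_at_right_field)
  then show ?thesis
    by (simp add: h_def exp_minus field_simps)
qed

lemma (in prob_space) Chernoff_ineq_ge_truncated:
  assumes "X \<in> borel_measurable M" "0 < \<theta>"
  shows "prob {w \<in> space M. x \<le> X w} \<le> exp (- \<theta> * x) * (\<integral>w. exp (\<theta> * min (X w) x) \<partial>M)"
proof -
  have integrable_exp: "integrable M (\<lambda>w. exp (\<theta> * min (X w) x))"
    using assms by (intro integrable_const_bound[where B="exp (\<theta> * x)"]) auto
  then show ?thesis
    using Chernoff_ineq_ge[OF \<open>0 < \<theta>\<close> _ sets.top, of "\<lambda>w. min (X w) x" x]
      integrable_mult_indicator[OF sets.top integrable_exp]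
    by (simp add: set_integral_space set_integrable_def)
qed

lemma abs_cont_deriv_exp_min:
  fixes t x :: real
  assumes "0 \<le> t"
  shows "abs_cont_deriv (\<lambda>s. exp (t * min s x)) (\<lambda>s. if s \<le> x then t * exp (t * s) else 0)"
  unfolding abs_cont_deriv_def
proof (intro conjI allI impI)
  let ?f = "\<lambda>s. exp (t * min s x)"
  let ?g = "\<lambda>s::real. if s \<le> x then t * exp (t * s) else 0"
  show g_measurable: "?g \<in> borel_measurable borel" by measurable
  fix a b :: real assume "a \<le> b"
  have "norm (?g s) \<le> t * exp (t * x)" for s
    using assms by (auto simp: mult_left_mono)
  then show g_integrable: "set_integrable lborel {a..b} ?g"
    unfolding set_integrable_def
    by (intro integrableI_bounded_set[where A="{a..b}" and B="t * exp (t * x)"])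
       (use g_measurable \<open>a \<le> b\<close> in \<open>auto simp: indicator_def emeasure_lborel_Icc_eq\<close>)
  have "(?g has_integral (?f b - ?f a)) {a..b}"
  proof (rule fundamental_theorem_of_calculus_interior_strong[where S="{x}"])
    fix s assume s: "s \<in> {a<..<b} - {x}"
    show "(?f has_vector_derivative ?g s) (at s)"
      unfolding has_real_derivative_iff_has_vector_derivative[symmetric]
    proof (cases "s < x")
      case True
      have "((\<lambda>s. exp (t * s)) has_real_derivative t * exp (t * s)) (at s)"
        by (auto intro!: derivative_eq_intros)
      then have "(?f has_real_derivative t * exp (t * s)) (at s)"
        by (rule has_field_derivative_transform_within_open[where S="{..<x}"]) (use True in auto)
      then show "(?f has_real_derivative ?g s) (at s)"
        using True by simp
    next
      case False
      with s have "x < s" by auto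
      have "((\<lambda>s. exp (t * x)) has_real_derivative 0) (at s)"
        by (rule DERIV_const)
      then have "(?f has_real_derivative 0) (at s)"
        by (rule has_field_derivative_transform_within_open[where S="{x<..}"]) (use \<open>x < s\<close> in auto)
      then show "(?f has_real_derivative ?g s) (at s)"
        using \<open>x < s\<close> by simp
    qed
  qed (use \<open>a \<le> b\<close> in \<open>auto intro!: continuous_intros\<close>)
  then show "?f b - ?f a = (LINT s:{a..b}|lborel. ?g s)"
    using set_borel_integral_eq_integral(2)[OF g_integrable] by (simp add: integral_unique)
qed

lemma zero_bias_weighted_order_le:
  fixes M :: "'a measure" and X :: "'a \<Rightarrow> real"
    and N :: "'b measure" and Xs :: "'b \<Rightarrow> real"
  assumes "prob_space M" "prob_space N"
    and X: "X \<in> borel_measurable M" "integrable M X" and Xs: "Xs \<in> borel_measurable N"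
    and variance: "\<sigma>\<^sup>2 = (\<integral>w. (X w - (\<integral>v. X v \<partial>M))\<^sup>2 \<partial>M)"
    and zero_bias: "zero_bias M X N Xs"
    and order: "weighted_order \<sigma> k N Xs M (\<lambda>w. X w + c)"
    and f: "abs_cont_deriv f g" "mono f" "\<And>s. 0 < f s" "\<And>s. f s \<le> B"
    and g: "\<And>s. 0 \<le> g s" "\<And>s. g s \<le> t * f s"
  shows "(\<integral>w. X w * f (X w) \<partial>M) \<le> t * k\<^sup>2 * (\<integral>w. f (X w + c) \<partial>M)"
proof -
  interpret M: prob_space M by fact
  interpret N: prob_space N by fact
  have "0 \<le> t * f 0"
    using g order.trans by blast
  then have "0 \<le> t"
    using f(3)[of 0] by (simp add: zero_le_mult_iff)
  have f_measurable[measurable]: "f \<in> borel_measurable borel"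
    using f(2) by (rule borel_measurable_mono)
  have g_measurable[measurable]: "g \<in> borel_measurable borel"
    using f(1) by (simp add: abs_cont_deriv_def)
  have f_abs_le: "\<bar>f s\<bar> \<le> B" for s
    using f(3,4) by (simp add: less_imp_le)
  have g_abs_le: "\<bar>g s\<bar> \<le> t * B" for s
    using g(1)[of s] order.trans[OF g(2) mult_left_mono[OF f(4) \<open>0 \<le> t\<close>]] by simp
  have integrable_Xf: "integrable M (\<lambda>w. X w * f (X w))"
    using X f_abs_le by (intro integrable_mult_bounded) auto
  have integrable_g: "integrable N (\<lambda>w. g (Xs w))"
    using Xs g_abs_le by (intro N.integrable_const_bound[where B="t * B"]) auto
  have integrable_f: "integrable N (\<lambda>w. f (Xs w))" "integrable M (\<lambda>w. f (X w + c))"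
    using X Xs f_abs_le by (auto intro!: N.integrable_const_bound[where B=B] M.integrable_const_bound[where B=B])
  have "(\<integral>w. X w * f (X w) \<partial>M) = \<sigma>\<^sup>2 * (\<integral>w. g (Xs w) \<partial>N)"
    using zero_bias f(1) integrable_Xf integrable_g unfolding zero_bias_def variance by blast
  also have "\<dots> \<le> \<sigma>\<^sup>2 * (t * (\<integral>w. f (Xs w) \<partial>N))"
    using integral_mono[OF integrable_g _ g(2)] integrable_f by (simp add: mult_left_mono)
  also have "\<dots> = t * (\<sigma>\<^sup>2 * (\<integral>w. f (Xs w) \<partial>N))"
    by simp
  also have "\<dots> \<le> t * (k\<^sup>2 * (\<integral>w. f (X w + c) \<partial>M))"
    using order f(2,3) integrable_f \<open>0 \<le> t\<close> unfolding weighted_order_def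
    by (intro mult_left_mono) auto
  finally show ?thesis
    by simp
qed

lemma zero_bias_truncated_exp_le:
  fixes M :: "'a measure" and X :: "'a \<Rightarrow> real"
    and N :: "'b measure" and Xs :: "'b \<Rightarrow> real"
  assumes "prob_space M" "prob_space N"
    and X: "X \<in> borel_measurable M" "integrable M X" and "Xs \<in> borel_measurable N"
    and "\<sigma>\<^sup>2 = (\<integral>w. (X w - (\<integral>v. X v \<partial>M))\<^sup>2 \<partial>M)"
    and "zero_bias M X N Xs" and "weighted_order \<sigma> k N Xs M (\<lambda>w. X w + c)"
    and "0 < t" "0 \<le> c"
  shows "(\<integral>w. min (X w) x * exp (t * min (X w) x) \<partial>M)
           \<le> k\<^sup>2 * t * exp (c * t) * (\<integral>w. exp (t * min (X w) x) \<partial>M)"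
proof -
  interpret M: prob_space M by fact
  define f where "f s = exp (t * min s x)" for s
  have f_le: "f s \<le> exp (t * x)" for s
    using \<open>0 < t\<close> by (simp add: f_def)
  have f_mono: "mono (\<lambda>s. exp (t * min s x))"
    using \<open>0 < t\<close> by (auto simp: mono_def intro: mult_left_mono)
  have integrable_f: "integrable M (\<lambda>w. f (X w))"
    using X f_le by (intro M.integrable_const_bound[where B="exp (t * x)"]) (auto simp: f_def)
  have "(\<integral>w. min (X w) x * exp (t * min (X w) x) \<partial>M) = (\<integral>w. min (X w) x * f (X w) \<partial>M)"
    by (simp add: f_def)
  also have "\<dots> \<le> (\<integral>w. X w * f (X w) \<partial>M)"
    using X f_le by (intro integral_mono integrable_mult_bounded) (auto simp: f_def)
  also have "\<dots> \<le> t * k\<^sup>2 * (\<integral>w. f (X w + c) \<partial>M)"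
    using abs_cont_deriv_exp_min[of t x] f_mono f_le \<open>0 < t\<close>
    by (intro zero_bias_weighted_order_le[OF assms(1-8),
          where g="\<lambda>s. if s \<le> x then t * exp (t * s) else 0" and B="exp (t * x)"])
       (auto simp: f_def[abs_def])
  also have "\<dots> \<le> t * k\<^sup>2 * (\<integral>w. exp (c * t) * f (X w) \<partial>M)"
  proof (intro mult_left_mono integral_mono)
    show "integrable M (\<lambda>w. f (X w + c))"
      using X f_le by (intro M.integrable_const_bound[where B="exp (t * x)"]) (auto simp: f_def)
    show "f (X w + c) \<le> exp (c * t) * f (X w)" for w
    proof -
      have shift: "min (X w + c) x \<le> c + min (X w) x"
        using \<open>0 \<le> c\<close> by linarith
      have "t * min (X w + c) x \<le> c * t + t * min (X w) x"
        using mult_left_mono[OF shift, of t] \<open>0 < t\<close> by (simp add: algebra_simps)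
      then show ?thesis
        by (simp add: f_def flip: exp_add)
    qed
  qed (use integrable_f \<open>0 < t\<close> in auto)
  also have "\<dots> = k\<^sup>2 * t * exp (c * t) * (\<integral>w. exp (t * min (X w) x) \<partial>M)"
    unfolding integral_mult_right_zero by (simp only: f_def ac_simps)
  finally show ?thesis .
qed

lemma truncated_mgf_le:
  fixes M :: "'a measure" and X :: "'a \<Rightarrow> real"
    and N :: "'b measure" and Xs :: "'b \<Rightarrow> real"
  assumes "prob_space M" "prob_space N"
    and X: "X \<in> borel_measurable M" "integrable M X" and "Xs \<in> borel_measurable N"
    and "\<sigma>\<^sup>2 = (\<integral>w. (X w - (\<integral>v. X v \<partial>M))\<^sup>2 \<partial>M)"
    and "zero_bias M X N Xs" and "weighted_order \<sigma> k N Xs M (\<lambda>w. X w + c)"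
    and "0 \<le> c" "0 < \<theta>" "c * \<theta> < 1"
  shows "(\<integral>w. exp (\<theta> * min (X w) x) \<partial>M) \<le> exp (k\<^sup>2 * \<theta>\<^sup>2 / (2 * (1 - c * \<theta>)))"
proof -
  interpret M: prob_space M by fact
  define F where "F t = (\<integral>w. exp (t * min (X w) x) \<partial>M)" for t
  have ct: "0 \<le> c * t" "c * t < 1" if "0 < t" "t \<le> \<theta>" for t
    using mult_left_mono[OF that(2) \<open>0 \<le> c\<close>] that \<open>c * \<theta> < 1\<close> \<open>0 \<le> c\<close> by auto
  have "F \<theta> \<le> exp (k\<^sup>2 * \<theta>\<^sup>2 / (2 * (1 - c * \<theta>)))"
  proof (rule le_exp_of_derivative_le[OF \<open>0 < \<theta>\<close>,
        where F'="\<lambda>t. \<integral>w. min (X w) x * exp (t * min (X w) x) \<partial>M"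
          and \<Phi>'="\<lambda>t. k\<^sup>2 * t * (2 - c * t) / (2 * (1 - c * t)\<^sup>2)" and G="\<lambda>t. exp (t * x)"])
    fix t assume t: "0 < t" "t \<le> \<theta>"
    show "(F has_real_derivative (\<integral>w. min (X w) x * exp (t * min (X w) x) \<partial>M)) (at t)"
      unfolding F_def[abs_def] using X(2) t by (intro M.has_real_derivative_mgf[where a=x]) auto
    show "((\<lambda>t. k\<^sup>2 * t\<^sup>2 / (2 * (1 - c * t))) has_real_derivative
        k\<^sup>2 * t * (2 - c * t) / (2 * (1 - c * t)\<^sup>2)) (at t)"
      using ct[OF t]
      by (auto intro!: derivative_eq_intros simp: divide_simps) (simp add: algebra_simps power2_eq_square)
    have rate: "k\<^sup>2 * t * exp (c * t) \<le> k\<^sup>2 * t * (2 - c * t) / (2 * (1 - c * t)\<^sup>2)"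
      using mult_left_mono[OF exp_le_div_one_minus_sq[OF ct[OF t]], of "k\<^sup>2 * t"] t by simp
    have "(\<integral>w. min (X w) x * exp (t * min (X w) x) \<partial>M) \<le> k\<^sup>2 * t * exp (c * t) * F t"
      unfolding F_def using assms(1-8) t(1) \<open>0 \<le> c\<close> by (rule zero_bias_truncated_exp_le)
    also have "\<dots> \<le> k\<^sup>2 * t * (2 - c * t) / (2 * (1 - c * t)\<^sup>2) * F t"
      using rate by (intro mult_right_mono) (simp_all add: F_def)
    finally show "(\<integral>w. min (X w) x * exp (t * min (X w) x) \<partial>M)
        \<le> k\<^sup>2 * t * (2 - c * t) / (2 * (1 - c * t)\<^sup>2) * F t" .
    show "0 \<le> F t \<and> 0 \<le> k\<^sup>2 * t\<^sup>2 / (2 * (1 - c * t))"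
      using ct[OF t] by (simp add: F_def)
    have "F t \<le> (\<integral>w. exp (t * x) \<partial>M)"
      unfolding F_def using X t
      by (intro integral_mono M.integrable_const_bound[where B="exp (t * x)"]) auto
    then show "F t \<le> exp (t * x)"
      by (simp add: M.prob_space)
  next
    show "((\<lambda>t. exp (t * x)) \<longlongrightarrow> 1) (at_right 0)"
      by (rule tendsto_eq_intros refl | simp)+
  qed
  then show ?thesis
    by (simp add: F_def)
qed

theorem corollary2p1:
  fixes M :: "'a measure" and X :: "'a \<Rightarrow> real"
    and N :: "'b measure" and Xs :: "'b \<Rightarrow> real"
    and \<sigma> k c x :: real
  assumes "prob_space M" and "prob_space N"
    and "X \<in> borel_measurable M" and "Xs \<in> borel_measurable N"
    and "integrable M X" and "integrable M (\<lambda>w. (X w)\<^sup>2)"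
    and "(\<integral>w. X w \<partial>M) = 0"
    and "\<sigma> > 0" and "\<sigma>\<^sup>2 = (\<integral>w. (X w - (\<integral>v. X v \<partial>M))\<^sup>2 \<partial>M)"
    and "zero_bias M X N Xs"
    and "k > 0" and "c > 0"
    and "weighted_order \<sigma> k N Xs M (\<lambda>w. X w + c)"
    and "x \<ge> 0"
  shows "measure M {w \<in> space M. X w - (\<integral>v. X v \<partial>M) \<ge> x}
           \<le> exp (- (x\<^sup>2 / (2 * (k\<^sup>2 + c * x))))"
proof (cases "x = 0")
  case False
  interpret M: prob_space M by fact
  define K where "K = k\<^sup>2 + c * x"
  define \<theta> where "\<theta> = x / K"
  have "0 < x" "0 < K"
    using False assms(11,12,14) by (auto simp: K_def add_pos_nonneg)
  then have "0 < \<theta>" "c * \<theta> < 1" "1 - c * \<theta> = k\<^sup>2 / K"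
    using assms(11) by (auto simp: \<theta>_def K_def field_simps)
  have "measure M {w \<in> space M. X w - (\<integral>v. X v \<partial>M) \<ge> x}
      \<le> exp (- \<theta> * x) * (\<integral>w. exp (\<theta> * min (X w) x) \<partial>M)"
    using M.Chernoff_ineq_ge_truncated[OF assms(3) \<open>0 < \<theta>\<close>] assms(7) by simp
  also have "\<dots> \<le> exp (- \<theta> * x) * exp (k\<^sup>2 * \<theta>\<^sup>2 / (2 * (1 - c * \<theta>)))"
    using assms(1-5,9,10,13) \<open>0 < c\<close> \<open>0 < \<theta>\<close> \<open>c * \<theta> < 1\<close>
    by (intro mult_left_mono truncated_mgf_le) auto
  also have "\<dots> = exp (- \<theta> * x + x\<^sup>2 / (2 * K))"
    using \<open>0 < K\<close> \<open>0 < k\<close> unfolding \<open>1 - c * \<theta> = k\<^sup>2 / K\<close> mult_exp_exp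
    by (simp add: \<theta>_def power2_eq_square)
  also have "- \<theta> * x + x\<^sup>2 / (2 * K) = - (x\<^sup>2 / (2 * (k\<^sup>2 + c * x)))"
    unfolding \<theta>_def K_def[symmetric] using \<open>0 < K\<close> by (simp add: field_simps power2_eq_square)
  finally show ?thesis .
qed (simp add: prob_space.prob_le_1[OF assms(1)])

end
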